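(* Let $n\ge2$ and $P_{II*}=\{\downarrow\{\xi\}:\ \xi\in P_I,\ |\xi|=n-1\}$. For partitions $\xi,\upsilon\in P_I$ with $|\xi|=|\upsilon|=n-1$, one has $\mathcal C_{\{\downarrow\{\xi\}\}\text{-unc}}=\mathcal C_{\{\downarrow\{\upsilon\}\}\text{-unc}}$ (the classes labelled by the filters $\uparrow\{\downarrow\{\xi\}\}\cap P_{II*}=\{\downarrow\{\xi\}\}$ and $\{\downarrow\{\upsilon\}\}$) if and only if $\xi=\upsilon$.
   Context: Let $L=\{1,\dots,n\}$, and for $i\in L$ let $\mathcal H_i$ be a Hilbert space with $1<\dim\mathcal H_i<\infty$; $\mathcal H_X=\bigotimes_{i\in X}\mathcal H_i$ and $\mathcal D_X$ is the set of density operators on $\mathcal H_X$. $P_I$ is the set of partitions of $L$ ordered by refinement; $|\xi|$ is the number of parts of $\xi$, and $\downarrow\{\xi\}=\{\upsilon\in P_I:\upsilon\preceq\xi\}$. For $\xi\in P_I$, $\mathcal D_{\xi\text{-unc}}=\{\varrho\in\mathcal D_L:\varrho=\bigotimes_{X\in\xi}\varrho_X,\ \varrho_X\in\mathcal D_X\}$, and for $S\subseteq P_I$, $\mathcal D_{S\text{-unc}}=\bigcup_{\xi\in S}\mathcal D_{\xi\text{-unc}}$. $P_{II}$ is the set of nonempty down-sets of $P_I$, ordered by inclusion; $P_{III*}$ is the set of nonempty up-sets of $P_{II*}$. For $\Xi\in P_{III*}$: $\overline\Xi=P_{II*}\setminus\Xi$ and $\mathcal C_{\Xi\text{-unc}}=\bigcap_{\boldsymbol\xi'\in\overline\Xi}(\mathcal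 D_L\setminus\mathcal D_{\boldsymbol\xi'\text{-unc}})\cap\bigcap_{\boldsymbol\xi\in\Xi}\mathcal D_{\boldsymbol\xi\text{-unc}}$. *)

theory Defs
  imports Complex_Main "HOL-Library.FuncSet" "HOL-Library.Disjoint_Sets"
begin

text \<open>Concrete model: H_i = C^(d i); an orthonormal basis of H_X is indexed by
  the multi-indices in idx d X (extensional functions X -> {..<d i}).
  An operator on H_X is represented by its matrix kernel, zero outside idx d X.\<close>

type_synonym op = "(nat \<Rightarrow> nat) \<Rightarrow> (nat \<Rightarrow> nat) \<Rightarrow> complex"

definition Lset :: "nat \<Rightarrow> nat set" where
  "Lset n = {1..n}"

definition idx :: "(nat \<Rightarrow> nat) \<Rightarrow> nat set \<Rightarrow> (nat \<Rightarrow> nat) set" where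
  "idx d X = PiE X (\<lambda>i. {..<d i})"

definition density :: "(nat \<Rightarrow> nat) \<Rightarrow> nat set \<Rightarrow> op \<Rightarrow> bool" where
  "density d X \<rho> \<longleftrightarrow>
     (\<forall>f g. f \<notin> idx d X \<or> g \<notin> idx d X \<longrightarrow> \<rho> f g = 0) \<and>
     (\<forall>v :: (nat \<Rightarrow> nat) \<Rightarrow> complex.
        let q = (\<Sum>f\<in>idx d X. \<Sum>g\<in>idx d X. cnj (v f) * \<rho> f g * v g)
        in Im q = 0 \<and> Re q \<ge> 0) \<and>
     (\<Sum>f\<in>idx d X. \<rho> f f) = 1"

definition tensor_prod :: "(nat \<Rightarrow> nat) \<Rightarrow> nat set \<Rightarrow> nat set set \<Rightarrow> (nat set \<Rightarrow> op) \<Rightarrow> op" where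
  "tensor_prod d L \<xi> R = (\<lambda>f g. if f \<in> idx d L \<and> g \<in> idx d L
      then (\<Prod>X\<in>\<xi>. R X (restrict f X) (restrict g X)) else 0)"

definition refines :: "nat set set \<Rightarrow> nat set set \<Rightarrow> bool" where
  "refines \<upsilon> \<xi> \<longleftrightarrow> (\<forall>Y\<in>\<upsilon>. \<exists>X\<in>\<xi>. Y \<subseteq> X)"

definition PI :: "nat \<Rightarrow> nat set set set" where
  "PI n = {\<xi>. partition_on (Lset n) \<xi>}"

definition down :: "nat \<Rightarrow> nat set set \<Rightarrow> nat set set set" where
  "down n \<xi> = {\<upsilon> \<in> PI n. refines \<upsilon> \<xi>}"

definition D_unc :: "(nat \<Rightarrow> nat) \<Rightarrow> nat \<Rightarrow> nat set set \<Rightarrow> op set" where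
  "D_unc d n \<xi> = {\<rho>. density d (Lset n) \<rho> \<and>
      (\<exists>R. (\<forall>X\<in>\<xi>. density d X (R X)) \<and> \<rho> = tensor_prod d (Lset n) \<xi> R)}"

definition D_S_unc :: "(nat \<Rightarrow> nat) \<Rightarrow> nat \<Rightarrow> nat set set set \<Rightarrow> op set" where
  "D_S_unc d n S = (\<Union>\<xi>\<in>S. D_unc d n \<xi>)"

definition PII_star :: "nat \<Rightarrow> nat set set set set" where
  "PII_star n = {down n \<xi> | \<xi>. \<xi> \<in> PI n \<and> card \<xi> = n - 1}"

definition C_unc :: "(nat \<Rightarrow> nat) \<Rightarrow> nat \<Rightarrow> nat set set set set \<Rightarrow> op set" where
  "C_unc d n \<Xi> = {\<rho>. density d (Lset n) \<rho> \<and>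
      (\<forall>S'\<in>PII_star n - \<Xi>. \<rho> \<notin> D_S_unc d n S') \<and>
      (\<forall>S\<in>\<Xi>. \<rho> \<in> D_S_unc d n S)}"

end

theory Submission
  imports Defs
begin

text \<open>A partition of L into n - 1 blocks consists of one pair {a, b} and singletons, so it is
  determined by its pair. For the pair {a, b} of \<xi> take the classically correlated state
  (|00\<rangle>\<langle>00| + |11\<rangle>\<langle>11|)/2 on the sites a, b, with all other sites in the basis state 0.
  It is \<xi>-uncorrelated. A product state over a partition separating a from b has diagonal
  entries p(s, t) (value s at a, t at b) with p(1, 0) p(0, 1) = p(0, 0) p(1, 1), which this state
  violates; and every refinement of a partition \<upsilon> \<noteq> \<xi> with n - 1 blocks separates a from b. So the state
  lies in the class labelled by \<xi> but not in the one labelled by \<upsilon>.\<close>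

lemma card_partition_on:
  assumes "partition_on L \<pi>" "finite L"
  shows "card L = card \<pi> + (\<Sum>X\<in>\<pi>. card X - 1)"
proof -
  have blocks_finite: "finite X" "X \<noteq> {}" if "X \<in> \<pi>" for X
    using that assms partition_onD3 by (auto simp: partition_on_def intro: finite_subset)
  have "card L = (\<Sum>X\<in>\<pi>. card X)"
    using assms card_Union_disjoint[of \<pi>] blocks_finite
    by (auto simp: partition_on_def disjoint_def pairwise_def disjnt_def)
  also have "\<dots> = (\<Sum>X\<in>\<pi>. 1 + (card X - 1))"
    using blocks_finite by (intro sum.cong) (auto simp: card_gt_0_iff Suc_le_eq)
  also have "\<dots> = card \<pi> + (\<Sum>X\<in>\<pi>. card X - 1)"
    unfolding sum.distrib by simp
  finally show ?thesis .
qed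

lemma partition_on_card_pred_obtains_pair:
  assumes "partition_on L \<pi>" "finite L" "card \<pi> = card L - 1" "2 \<le> card L"
  obtains B a b where "B \<in> \<pi>" "a \<in> B" "b \<in> B" "a \<noteq> b"
proof -
  have "finite \<pi>" using assms(2,1) by (rule finite_elements)
  moreover have "(\<Sum>X\<in>\<pi>. card X - 1) = 1"
    using card_partition_on[OF assms(1,2)] assms(3,4) by linarith
  ultimately obtain B where B: "B \<in> \<pi>" "card B - 1 \<noteq> 0"
    by (metis sum.neutral zero_neq_one)
  have "finite B" using B(1) assms(1,2) by (auto simp: partition_on_def intro: finite_subset)
  then have "\<not> (\<forall>x\<in>B. \<forall>y\<in>B. x = y)" using card_le_Suc0_iff_eq[of B] B(2) by simp
  then show thesis using that B(1) by blast
qed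

lemma partition_on_card_pred_eq:
  assumes P: "partition_on L \<pi>" and fin: "finite L" and card: "card \<pi> = card L - 1"
    and B: "B \<in> \<pi>" "a \<in> B" "b \<in> B" and ab: "a \<noteq> b"
  shows "\<pi> = insert {a, b} ((\<lambda>i. {i}) ` (L - {a, b}))"
proof -
  have U: "\<Union>\<pi> = L" and disj: "disjoint \<pi>" using P by (auto simp: partition_on_def)
  have fin_blocks: "finite X" "X \<noteq> {}" if "X \<in> \<pi>" for X
    using that U fin partition_onD3[OF P] by (auto intro: finite_subset)
  have sub: "{a, b} \<subseteq> B" using B by simp
  then have B2: "2 \<le> card B" using ab card_mono[OF fin_blocks(1)[OF B(1)] sub] by simp
  have "card B \<le> card L" using B(1) U fin by (intro card_mono) auto
  then have "(\<Sum>X\<in>\<pi>. card X - 1) = 1"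
    using card_partition_on[OF P fin] card B2 by linarith
  moreover have "finite \<pi>" using fin P by (rule finite_elements)
  ultimately have "card B - 1 + (\<Sum>X\<in>\<pi> - {B}. card X - 1) = 1"
    using B(1) by (simp add: sum.remove)
  then have "card B = 2" and "(\<Sum>X\<in>\<pi> - {B}. card X - 1) = 0"
    using B2 by linarith+
  then have Bab: "B = {a, b}" and rest: "\<And>X. X \<in> \<pi> - {B} \<Longrightarrow> card X \<le> 1"
    using \<open>finite \<pi>\<close> card_subset_eq[OF fin_blocks(1)[OF B(1)] sub] ab by auto
  have singleton: "\<exists>i. X = {i}" if "X \<in> \<pi>" "X \<noteq> B" for X
  proof -
    have "card X = 1"
      using rest[of X] that fin_blocks[OF that(1)] by (simp add: le_Suc_eq card_gt_0_iff)
    then show ?thesis by (rule card_1_singletonE) blast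
  qed
  show ?thesis
  proof (intro equalityI subsetI)
    fix X assume X: "X \<in> \<pi>"
    show "X \<in> insert {a, b} ((\<lambda>i. {i}) ` (L - {a, b}))"
    proof (cases "X = B")
      case False
      then obtain i where "X = {i}" using singleton X by blast
      moreover have "X \<inter> B = {}" using disjointD[OF disj X B(1) False] .
      ultimately show ?thesis using X U Bab by auto
    qed (simp add: Bab)
  next
    fix X assume "X \<in> insert {a, b} ((\<lambda>i. {i}) ` (L - {a, b}))"
    then consider "X = {a, b}" | i where "i \<in> L" "i \<notin> {a, b}" "X = {i}" by auto
    then show "X \<in> \<pi>"
    proof cases
      case 2
      then obtain Z where Z: "Z \<in> \<pi>" "i \<in> Z" using U by blast
      then have "Z \<noteq> B" using 2 Bab by auto
      then show ?thesis using singleton[OF Z(1)] Z 2 by auto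
    qed (use B Bab in simp)
  qed
qed

definition diag_op :: "(nat \<Rightarrow> nat) \<Rightarrow> nat set \<Rightarrow> ((nat \<Rightarrow> nat) \<Rightarrow> real) \<Rightarrow> op" where
  "diag_op d X w = (\<lambda>f g. if f = g \<and> f \<in> idx d X then complex_of_real (w f) else 0)"

lemma finite_idx: "finite X \<Longrightarrow> finite (idx d X)"
  unfolding idx_def by (simp add: finite_PiE)

lemma restrict_in_idx: "f \<in> idx d L \<Longrightarrow> X \<subseteq> L \<Longrightarrow> restrict f X \<in> idx d X"
  unfolding idx_def by (auto simp: restrict_PiE_iff dest: PiE_mem)

lemma density_diag_op:
  assumes "finite X" and nonneg: "\<And>f. 0 \<le> w f" and trace: "(\<Sum>f\<in>idx d X. w f) = 1"
  shows "density d X (diag_op d X w)"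
proof -
  let ?I = "idx d X"
  have "finite ?I" using assms(1) by (rule finite_idx)
  have quadratic_form:
    "(\<Sum>f\<in>?I. \<Sum>g\<in>?I. cnj (v f) * diag_op d X w f g * v g) = of_real (\<Sum>f\<in>?I. w f * (cmod (v f))\<^sup>2)"
    for v
  proof -
    have "(\<Sum>f\<in>?I. \<Sum>g\<in>?I. cnj (v f) * diag_op d X w f g * v g) = (\<Sum>f\<in>?I. of_real (w f) * (cnj (v f) * v f))"
      using \<open>finite ?I\<close> by (intro sum.cong) (auto simp: diag_op_def if_distrib if_distribR sum.delta cong: if_cong)
    also have "\<dots> = of_real (\<Sum>f\<in>?I. w f * (cmod (v f))\<^sup>2)"
      by (simp add: complex_norm_square mult.commute del: of_real_power)
    finally show ?thesis .
  qed
  have "0 \<le> (\<Sum>f\<in>?I. w f * (cmod (v f))\<^sup>2)" for v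
    using nonneg by (intro sum_nonneg) simp
  moreover have "(\<Sum>f\<in>?I. diag_op d X w f f) = 1"
    using trace by (simp add: diag_op_def flip: of_real_sum)
  ultimately show ?thesis
    unfolding density_def Let_def quadratic_form by (simp add: diag_op_def)
qed

lemma restrict_eq_on_cover_iff:
  assumes "f \<in> extensional L" "g \<in> extensional L" "\<Union>\<xi> = L"
  shows "(\<forall>X\<in>\<xi>. restrict f X = restrict g X) \<longleftrightarrow> f = g"
proof
  assume agree: "\<forall>X\<in>\<xi>. restrict f X = restrict g X"
  show "f = g"
  proof
    fix i show "f i = g i"
    proof (cases "i \<in> L")
      case True
      then obtain X where "X \<in> \<xi>" "i \<in> X" using assms(3) by blast
      then have "restrict f X i = restrict g X i" using agree by simp
      then show ?thesis using \<open>i \<in> X\<close> by simp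
    qed (use assms extensional_arb in metis)
  qed
qed simp

lemma tensor_prod_diag_op:
  assumes "partition_on L \<xi>" "finite L"
  shows "tensor_prod d L \<xi> (\<lambda>X. diag_op d X (w X)) = diag_op d L (\<lambda>f. \<Prod>X\<in>\<xi>. w X (restrict f X))"
proof (intro ext)
  fix f g
  have U: "\<Union>\<xi> = L" using assms(1) by (simp add: partition_on_def)
  have "finite \<xi>" using assms(2,1) by (rule finite_elements)
  show "tensor_prod d L \<xi> (\<lambda>X. diag_op d X (w X)) f g = diag_op d L (\<lambda>f. \<Prod>X\<in>\<xi>. w X (restrict f X)) f g"
  proof (cases "f \<in> idx d L \<and> g \<in> idx d L")
    case True
    then have restrict_idx: "restrict f X \<in> idx d X" if "X \<in> \<xi>" for X
      using that U by (intro restrict_in_idx) auto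
    show ?thesis
    proof (cases "f = g")
      case False
      have "f \<in> extensional L" "g \<in> extensional L" using True by (auto simp: idx_def PiE_def)
      then obtain X where "X \<in> \<xi>" "restrict f X \<noteq> restrict g X"
        using restrict_eq_on_cover_iff[OF _ _ U] False by blast
      then show ?thesis
        using True False \<open>finite \<xi>\<close> by (auto simp: tensor_prod_def diag_op_def intro: prod_zero)
    qed (use True restrict_idx in \<open>simp add: tensor_prod_def diag_op_def\<close>)
  qed (auto simp: tensor_prod_def diag_op_def)
qed

lemma prod_of_bool:
  "finite A \<Longrightarrow> (\<Prod>x\<in>A. of_bool (P x) :: 'a :: comm_semiring_1) = of_bool (\<forall>x\<in>A. P x)"
  by (induction A rule: finite_induct) auto

definition pair_index :: "nat set \<Rightarrow> nat \<Rightarrow> nat \<Rightarrow> nat \<Rightarrow> nat \<Rightarrow> (nat \<Rightarrow> nat)" where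
  "pair_index X a b s t = restrict (\<lambda>i. if i = a then s else if i = b then t else 0) X"

lemma pair_index_in_idx:
  "\<forall>i\<in>X. 1 < d i \<Longrightarrow> s \<le> 1 \<Longrightarrow> t \<le> 1 \<Longrightarrow> pair_index X a b s t \<in> idx d X"
  unfolding pair_index_def idx_def by (auto simp: PiE_iff dest!: bspec)

lemma pair_index_extensional: "pair_index X a b s t \<in> extensional X"
  by (simp add: pair_index_def)

lemma restrict_pair_index: "Y \<subseteq> X \<Longrightarrow> restrict (pair_index X a b s t) Y = pair_index Y a b s t"
  unfolding pair_index_def by (auto simp: fun_eq_iff)

lemma pair_index_cong:
  "(a \<in> Y \<Longrightarrow> s = s') \<Longrightarrow> (b \<in> Y \<Longrightarrow> t = t') \<Longrightarrow> pair_index Y a b s t = pair_index Y a b s' t'"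
  unfolding pair_index_def by (auto simp: fun_eq_iff)

lemma pair_index_inject:
  assumes "a \<in> X" "b \<in> X" "a \<noteq> b"
  shows "pair_index X a b s t = pair_index X a b s' t' \<longleftrightarrow> s = s' \<and> t = t'"
proof
  assume "pair_index X a b s t = pair_index X a b s' t'"
  then have "pair_index X a b s t a = pair_index X a b s' t' a"
    and "pair_index X a b s t b = pair_index X a b s' t' b" by simp_all
  then show "s = s' \<and> t = t'" using assms by (simp add: pair_index_def)
qed simp

text \<open>On a set X avoiding a and b the two indices coincide, so there the weight is that of the
  pure basis state 0; this lets one definition describe the state and all its tensor factors.\<close>
definition corr_weight :: "nat \<Rightarrow> nat \<Rightarrow> nat set \<Rightarrow> (nat \<Rightarrow> nat) \<Rightarrow> real" where
  "corr_weight a b X f = (of_bool (f = pair_index X a b 0 0) + of_bool (f = pair_index X a b 1 1)) / 2"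

definition corr_state :: "(nat \<Rightarrow> nat) \<Rightarrow> nat set \<Rightarrow> nat \<Rightarrow> nat \<Rightarrow> op" where
  "corr_state d X a b = diag_op d X (corr_weight a b X)"

lemma density_corr_state:
  assumes "finite X" "\<forall>i\<in>X. 1 < d i"
  shows "density d X (corr_state d X a b)"
  unfolding corr_state_def
proof (rule density_diag_op[OF assms(1)])
  show "0 \<le> corr_weight a b X f" for f by (simp add: corr_weight_def)
  show "(\<Sum>f\<in>idx d X. corr_weight a b X f) = 1"
    using finite_idx[OF assms(1)] pair_index_in_idx[OF assms(2)]
    unfolding corr_weight_def of_bool_def
    by (simp add: sum_divide_distrib[symmetric] sum.distrib sum.delta')
qed

lemma prod_corr_weight:
  assumes P: "partition_on L \<xi>" and fin: "finite L" and B: "B \<in> \<xi>" "a \<in> B" "b \<in> B"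
    and f: "f \<in> extensional L"
  shows "(\<Prod>X\<in>\<xi>. corr_weight a b X (restrict f X)) = corr_weight a b L f"
proof -
  have U: "\<Union>\<xi> = L" using P by (simp add: partition_on_def)
  have "finite \<xi>" using fin P by (rule finite_elements)
  have outside: "a \<notin> X" "b \<notin> X" if "X \<in> \<xi> - {B}" for X
    using that B disjointD[OF partition_onD2[OF P]] by blast+
  define agrees :: "nat \<Rightarrow> nat set \<Rightarrow> real"
    where "agrees c X = of_bool (restrict f X = pair_index X a b c c)" for c X
  have agrees_all: "(\<Prod>X\<in>\<xi>. agrees c X) = of_bool (f = pair_index L a b c c)" for c
  proof -
    have "(\<forall>X\<in>\<xi>. restrict f X = pair_index X a b c c) \<longleftrightarrow> f = pair_index L a b c c"
      using restrict_eq_on_cover_iff[OF f pair_index_extensional U] U restrict_pair_index[of _ L]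
      by (metis (no_types, lifting) Union_upper)
    then show ?thesis using \<open>finite \<xi>\<close> by (simp add: agrees_def prod_of_bool)
  qed
  have off_block: "(\<Prod>X\<in>\<xi> - {B}. corr_weight a b X (restrict f X)) = (\<Prod>X\<in>\<xi> - {B}. agrees c X)" for c
  proof (rule prod.cong[OF refl])
    fix X assume "X \<in> \<xi> - {B}"
    then have "pair_index X a b c c = pair_index X a b 0 0" "pair_index X a b 1 1 = pair_index X a b 0 0"
      using outside by (auto intro: pair_index_cong)
    then show "corr_weight a b X (restrict f X) = agrees c X"
      by (simp add: corr_weight_def agrees_def)
  qed
  have "(\<Prod>X\<in>\<xi>. corr_weight a b X (restrict f X))
      = corr_weight a b B (restrict f B) * (\<Prod>X\<in>\<xi> - {B}. corr_weight a b X (restrict f X))"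
    using \<open>finite \<xi>\<close> B(1) by (rule prod.remove)
  also have "\<dots> = (agrees 0 B * (\<Prod>X\<in>\<xi> - {B}. agrees 0 X) + agrees 1 B * (\<Prod>X\<in>\<xi> - {B}. agrees 1 X)) / 2"
    unfolding off_block[of 0, symmetric] off_block[of 1, symmetric]
    by (simp add: corr_weight_def agrees_def algebra_simps)
  also have "\<dots> = ((\<Prod>X\<in>\<xi>. agrees 0 X) + (\<Prod>X\<in>\<xi>. agrees 1 X)) / 2"
    using \<open>finite \<xi>\<close> B(1) by (simp add: prod.remove)
  also have "\<dots> = corr_weight a b L f"
    by (simp add: agrees_all corr_weight_def)
  finally show ?thesis .
qed

lemma corr_state_eq_tensor_prod:
  assumes "partition_on L \<xi>" "finite L" "B \<in> \<xi>" "a \<in> B" "b \<in> B"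
  shows "corr_state d L a b = tensor_prod d L \<xi> (\<lambda>X. corr_state d X a b)"
proof -
  have "corr_weight a b L f = (\<Prod>X\<in>\<xi>. corr_weight a b X (restrict f X))" if "f \<in> idx d L" for f
    using that prod_corr_weight[OF assms] by (simp add: idx_def PiE_def)
  then show ?thesis
    unfolding corr_state_def tensor_prod_diag_op[OF assms(1,2)] by (auto simp: diag_op_def fun_eq_iff)
qed

lemma tensor_prod_cross_diagonal:
  assumes P: "partition_on L u" and fin: "finite L" and d: "\<forall>i\<in>L. 1 < d i"
    and XY: "X \<in> u" "Y \<in> u" "X \<noteq> Y" and ab: "a \<in> X" "b \<in> Y"
  defines "e \<equiv> pair_index L a b"
  shows "tensor_prod d L u R (e 1 0) (e 1 0) * tensor_prod d L u R (e 0 1) (e 0 1)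
       = tensor_prod d L u R (e 0 0) (e 0 0) * tensor_prod d L u R (e 1 1) (e 1 1)"
proof -
  have U: "\<Union>u = L" using P by (simp add: partition_on_def)
  have "finite u" using fin P by (rule finite_elements)
  have outside: "Z \<noteq> X \<Longrightarrow> a \<notin> Z" "Z \<noteq> Y \<Longrightarrow> b \<notin> Z" if "Z \<in> u" for Z
    using that XY ab disjointD[OF partition_onD2[OF P]] by blast+
  define C where "C = (\<Prod>Z\<in>u - {X} - {Y}. R Z (pair_index Z a b 0 0) (pair_index Z a b 0 0))"
  have entry: "tensor_prod d L u R (e s t) (e s t)
      = R X (pair_index X a b s 0) (pair_index X a b s 0) * R Y (pair_index Y a b 0 t) (pair_index Y a b 0 t) * C"
    if "s \<le> 1" "t \<le> 1" for s t
  proof -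
    let ?F = "\<lambda>Z. R Z (pair_index Z a b s t) (pair_index Z a b s t)"
    have "restrict (e s t) Z = pair_index Z a b s t" if "Z \<in> u" for Z
      using that U by (auto simp: e_def intro!: restrict_pair_index)
    then have "tensor_prod d L u R (e s t) (e s t) = (\<Prod>Z\<in>u. ?F Z)"
      using pair_index_in_idx[OF d that] by (simp add: e_def tensor_prod_def)
    also have "\<dots> = ?F X * (?F Y * (\<Prod>Z\<in>u - {X} - {Y}. ?F Z))"
      using \<open>finite u\<close> XY by (simp add: prod.remove[of u X] prod.remove[of "u - {X}" Y])
    also have "(\<Prod>Z\<in>u - {X} - {Y}. ?F Z) = C"
      unfolding C_def using outside by (intro prod.cong refl arg_cong2[where f = "R _"] pair_index_cong) auto
    also have "pair_index X a b s t = pair_index X a b s 0"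
      using outside XY by (intro pair_index_cong) auto
    also have "pair_index Y a b s t = pair_index Y a b 0 t"
      using outside XY by (intro pair_index_cong) auto
    finally show ?thesis by (simp add: mult.assoc)
  qed
  show ?thesis
    using entry[of 1 0] entry[of 0 1] entry[of 0 0] entry[of 1 1] by (simp add: algebra_simps)
qed

lemma corr_state_in_D_unc:
  assumes P: "partition_on (Lset n) \<xi>" and d: "\<forall>i\<in>Lset n. 1 < d i"
    and B: "B \<in> \<xi>" "a \<in> B" "b \<in> B"
  shows "corr_state d (Lset n) a b \<in> D_unc d n \<xi>"
proof -
  have fin: "finite (Lset n)" by (simp add: Lset_def)
  have blocks: "density d X (corr_state d X a b)" if "X \<in> \<xi>" for X
  proof (rule density_corr_state)
    have "X \<subseteq> Lset n" using that P by (auto simp: partition_on_def)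
    then show "finite X" "\<forall>i\<in>X. 1 < d i" using fin d by (auto intro: finite_subset)
  qed
  show ?thesis
    unfolding D_unc_def mem_Collect_eq
  proof (intro conjI exI[where x = "\<lambda>X. corr_state d X a b"] ballI)
    show "density d (Lset n) (corr_state d (Lset n) a b)" by (rule density_corr_state[OF fin d])
    show "density d X (corr_state d X a b)" if "X \<in> \<xi>" for X using that by (rule blocks)
    show "corr_state d (Lset n) a b = tensor_prod d (Lset n) \<xi> (\<lambda>X. corr_state d X a b)"
      by (rule corr_state_eq_tensor_prod[OF P fin B])
  qed
qed

lemma corr_state_notin_D_unc:
  assumes P: "partition_on (Lset n) u" and d: "\<forall>i\<in>Lset n. 1 < d i"
    and XY: "X \<in> u" "Y \<in> u" "X \<noteq> Y" and ab: "a \<in> X" "b \<in> Y"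
  shows "corr_state d (Lset n) a b \<notin> D_unc d n u"
proof
  let ?L = "Lset n" and ?\<rho> = "corr_state d (Lset n) a b"
  let ?e = "pair_index ?L a b"
  assume "?\<rho> \<in> D_unc d n u"
  then obtain R where R: "?\<rho> = tensor_prod d ?L u R" unfolding D_unc_def by blast
  have fin: "finite ?L" by (simp add: Lset_def)
  have "a \<in> ?L" "b \<in> ?L" "a \<noteq> b"
    using P XY ab disjointD[OF partition_onD2[OF P]] by (auto simp: partition_on_def)
  then have inj: "?e s t = ?e s' t' \<longleftrightarrow> s = s' \<and> t = t'" for s t s' t'
    by (rule pair_index_inject)
  have entry: "?\<rho> (?e s t) (?e s t) = corr_weight a b ?L (?e s t)" if "s \<le> 1" "t \<le> 1" for s t
    using pair_index_in_idx[OF d that] by (simp add: corr_state_def diag_op_def)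
  have entries: "?\<rho> (?e 1 0) (?e 1 0) = 0" "?\<rho> (?e 0 1) (?e 0 1) = 0"
    "?\<rho> (?e 0 0) (?e 0 0) = 1/2" "?\<rho> (?e 1 1) (?e 1 1) = 1/2"
    using entry[of 1 0] entry[of 0 1] entry[of 0 0] entry[of 1 1] by (simp_all add: corr_weight_def inj)
  have "?\<rho> (?e 1 0) (?e 1 0) * ?\<rho> (?e 0 1) (?e 0 1) = ?\<rho> (?e 0 0) (?e 0 0) * ?\<rho> (?e 1 1) (?e 1 1)"
    unfolding R by (rule tensor_prod_cross_diagonal[OF P fin d XY ab])
  then show False unfolding entries by simp
qed

lemma corr_state_in_D_S_unc_down_iff:
  assumes \<xi>: "\<xi> \<in> PI n" "card \<xi> = n - 1" and d: "\<forall>i\<in>Lset n. 1 < d i"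
    and B: "B \<in> \<xi>" "a \<in> B" "b \<in> B" "a \<noteq> b"
    and \<zeta>: "\<zeta> \<in> PI n" "card \<zeta> = n - 1"
  shows "corr_state d (Lset n) a b \<in> D_S_unc d n (down n \<zeta>) \<longleftrightarrow> \<zeta> = \<xi>"
proof
  have fin: "finite (Lset n)" and card: "card (Lset n) = n" by (simp_all add: Lset_def)
  assume "corr_state d (Lset n) a b \<in> D_S_unc d n (down n \<zeta>)"
  then obtain u where u: "u \<in> PI n" "refines u \<zeta>" "corr_state d (Lset n) a b \<in> D_unc d n u"
    by (auto simp: D_S_unc_def down_def)
  have "a \<in> \<Union>u" "b \<in> \<Union>u"
    using \<xi>(1) u(1) B by (auto simp: PI_def partition_on_def)
  then obtain X Y where XY: "X \<in> u" "a \<in> X" "Y \<in> u" "b \<in> Y" by blast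
  have "X = Y"
    using corr_state_notin_D_unc[OF _ d XY(1,3) _ XY(2,4)] u(1,3) unfolding PI_def by blast
  then obtain Z where "Z \<in> \<zeta>" "a \<in> Z" "b \<in> Z" using u(2) XY unfolding refines_def by blast
  then show "\<zeta> = \<xi>"
    using partition_on_card_pred_eq[OF _ fin, of \<zeta> Z a b] partition_on_card_pred_eq[OF _ fin, of \<xi> B a b]
      \<xi> \<zeta> B card by (simp add: PI_def)
next
  assume "\<zeta> = \<xi>"
  moreover have "\<xi> \<in> down n \<xi>" using \<xi>(1) by (auto simp: down_def refines_def)
  ultimately show "corr_state d (Lset n) a b \<in> D_S_unc d n (down n \<zeta>)"
    using corr_state_in_D_unc[OF _ d B(1-3)] \<xi>(1) by (auto simp: D_S_unc_def PI_def)
qed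

lemma corr_state_in_C_unc:
  assumes \<xi>: "\<xi> \<in> PI n" "card \<xi> = n - 1" and d: "\<forall>i\<in>Lset n. 1 < d i"
    and B: "B \<in> \<xi>" "a \<in> B" "b \<in> B" "a \<noteq> b"
  shows "corr_state d (Lset n) a b \<in> C_unc d n {down n \<xi>}"
  using density_corr_state[OF _ d] corr_state_in_D_S_unc_down_iff[OF \<xi> d B]
    corr_state_in_D_S_unc_down_iff[OF \<xi> d B \<xi>]
  by (auto simp: C_unc_def PII_star_def Lset_def)

theorem proposition8:
  fixes n :: nat and d :: "nat \<Rightarrow> nat" and \<xi> \<upsilon> :: "nat set set"
  assumes "n \<ge> 2"
    and "\<forall>i\<in>Lset n. 1 < d i"
    and "\<xi> \<in> PI n" and "card \<xi> = n - 1"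
    and "\<upsilon> \<in> PI n" and "card \<upsilon> = n - 1"
  shows "C_unc d n {down n \<xi>} = C_unc d n {down n \<upsilon>} \<longleftrightarrow> \<xi> = \<upsilon>"
proof
  assume classes_eq: "C_unc d n {down n \<xi>} = C_unc d n {down n \<upsilon>}"
  have "card (Lset n) = n" by (simp add: Lset_def)
  then obtain B a b where B: "B \<in> \<xi>" "a \<in> B" "b \<in> B" "a \<noteq> b"
    using partition_on_card_pred_obtains_pair[of "Lset n" \<xi>] assms(1,3,4) by (auto simp: PI_def Lset_def)
  have "corr_state d (Lset n) a b \<in> C_unc d n {down n \<upsilon>}"
    using corr_state_in_C_unc[OF assms(3,4,2) B] classes_eq by simp
  then have "corr_state d (Lset n) a b \<in> D_S_unc d n (down n \<upsilon>)"
    by (simp add: C_unc_def)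
  then show "\<xi> = \<upsilon>"
    using corr_state_in_D_S_unc_down_iff[OF assms(3,4,2) B assms(5,6)] by simp
qed simp

end
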